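(* Let $F$ be a semi-flow on a connected metrizable space $X$. Then $\mathcal{NW}_F$ is forward-invariant under the induced action $F^t(x,y)=(F^t(x),F^t(y))$ on $X\times X$. Moreover, for every $x\in X$: (1) $\mathrm{Down}_{\mathcal{NW}_F}(x)$ is forward-invariant under $F$; (2) $\mathrm{Down}_{\mathcal{NW}_F}(x)\supset\mathcal{O}_F(x)\cup\Omega_F(x)$; (3) if $\Omega_F(x)\neq\emptyset$, then $\mathcal{O}_F(x)\cup\mathrm{Down}_{\mathcal{NW}_F}(\Omega_F(x))\supset\mathrm{Down}_{\mathcal{NW}_F}(x)$; (4) $\mathcal{O}_F(x)\cup\mathrm{Down}_{\mathcal{NW}_F}(y)\supset\mathrm{Down}_{\mathcal{NW}_F}(x)$ for all $y\in\mathcal{O}_F(x)$; (5) if $F^t$ is an open map for every $t\ge0$, then $\mathrm{Down}_{\mathcal{NW}_F}(x)=\mathcal{O}_F(x)\cup\mathrm{Down}_{\mathcal{NW}_F}(y)$ for all $y\in\mathcal{O}_F(x)$.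
   Context: A semi-flow on $X$ is a continuous map $F:\mathbb{T}\times X\to X$, $(t,x)\mapsto F^t(x)$, where $\mathbb{T}=\{0,1,2,\dots\}$ or $[0,\infty)$, with $F^0=\mathrm{id}$ and $F^{t_1+t_2}=F^{t_2}\circ F^{t_1}$. Put $\mathcal{O}_F(x)=\{F^t(x):t\in\mathbb{T}\}$ and $\mathcal{O}_F=\{(x,y):y\in\mathcal{O}_F(x)\}$. $\Omega_F(x)$ is the set of $y$ with $F^{t_n}(x)\to y$ for some $t_n\to\infty$. The non-wandering relation $\mathcal{NW}_F$ is the closure of $\mathcal{O}_F$ in $X\times X$. For a relation $D$, $\mathrm{Down}_D(x)=\{y:(x,y)\in D\}$ and $\mathrm{Down}_D(M)=\bigcup_{x\in M}\mathrm{Down}_D(x)$. A set $A$ is forward-invariant under $F$ if $F^t(A)\subset A$ for all $t$. *)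

theory Defs
  imports "HOL-Analysis.Analysis"
begin

text \<open>Time set: either the naturals (embedded in the reals) or [0,\<infinity>).
  A semi-flow is represented by F :: real => 'a => 'a; only its values on the time set T matter.\<close>

definition time_set :: "real set \<Rightarrow> bool" where
  "time_set T \<longleftrightarrow> T = range real \<or> T = {0..}"

definition semiflow :: "real set \<Rightarrow> (real \<Rightarrow> 'a::topological_space \<Rightarrow> 'a) \<Rightarrow> bool" where
  "semiflow T F \<longleftrightarrow> time_set T
     \<and> continuous_on (T \<times> UNIV) (\<lambda>(t, x). F t x)
     \<and> F 0 = id
     \<and> (\<forall>t1\<in>T. \<forall>t2\<in>T. F (t1 + t2) = F t2 \<circ> F t1)"

definition orbit :: "real set \<Rightarrow> (real \<Rightarrow> 'a \<Rightarrow> 'a) \<Rightarrow> 'a \<Rightarrow> 'a set" where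
  "orbit T F x = {F t x | t. t \<in> T}"

definition orbit_rel :: "real set \<Rightarrow> (real \<Rightarrow> 'a \<Rightarrow> 'a) \<Rightarrow> ('a \<times> 'a) set" where
  "orbit_rel T F = {(x, y). y \<in> orbit T F x}"

definition omega_limit :: "real set \<Rightarrow> (real \<Rightarrow> 'a::topological_space \<Rightarrow> 'a) \<Rightarrow> 'a \<Rightarrow> 'a set" where
  "omega_limit T F x = {y. \<exists>s :: nat \<Rightarrow> real. (\<forall>n. s n \<in> T) \<and> filterlim s at_top sequentially
                          \<and> (\<lambda>n. F (s n) x) \<longlonglongrightarrow> y}"

definition nonwandering_rel :: "real set \<Rightarrow> (real \<Rightarrow> 'a::topological_space \<Rightarrow> 'a) \<Rightarrow> ('a \<times> 'a) set" where
  "nonwandering_rel T F = closure (orbit_rel T F)"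

definition Down :: "('a \<times> 'b) set \<Rightarrow> 'a \<Rightarrow> 'b set" where
  "Down D x = {y. (x, y) \<in> D}"

definition Down_set :: "('a \<times> 'b) set \<Rightarrow> 'a set \<Rightarrow> 'b set" where
  "Down_set D M = (\<Union>x\<in>M. Down D x)"

definition forward_invariant :: "real set \<Rightarrow> (real \<Rightarrow> 'a \<Rightarrow> 'a) \<Rightarrow> 'a set \<Rightarrow> bool" where
  "forward_invariant T F A \<longleftrightarrow> (\<forall>t\<in>T. F t ` A \<subseteq> A)"

definition prod_action :: "(real \<Rightarrow> 'a \<Rightarrow> 'a) \<Rightarrow> real \<Rightarrow> 'a \<times> 'a \<Rightarrow> 'a \<times> 'a" where
  "prod_action F t = (\<lambda>(x, y). (F t x, F t y))"

end

theory Submission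
  imports Defs
begin

(* Everything rests on a dichotomy for a non-wandering pair (x, y). Write
   y = lim F^(t_n) (x_n) with x_n -> x. If the times t_n have a bounded subsequence, compactness
   of bounded time intervals and joint continuity of the semi-flow put y on the orbit of x.
   Otherwise t_n -> infinity, and the orbit pairs (F^s x_n, F^(t_n) x_n) show that (F^s x, y) is
   non-wandering for every s. Items (3) and (4) follow from this dichotomy; forward invariance
   holds because the continuous maps F^t x F^t and id x F^t preserve the orbit relation, hence
   its closure; and for open maps F^s an orbit pair near (F^s x, w) pulls back to an orbit pair
   near (x, w), which gives (5). *)

lemma time_set_add: "time_set T \<Longrightarrow> s \<in> T \<Longrightarrow> t \<in> T \<Longrightarrow> s + t \<in> T"
  unfolding time_set_def by (auto simp flip: of_nat_add)

lemma time_set_diff: "time_set T \<Longrightarrow> s \<in> T \<Longrightarrow> t \<in> T \<Longrightarrow> s \<le> t \<Longrightarrow> t - s \<in> T"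
  unfolding time_set_def by (auto simp flip: of_nat_diff)

lemma compact_time_set_atMost:
  assumes "time_set T"
  shows "compact (T \<inter> {..B})"
  using assms unfolding time_set_def
proof
  assume T: "T = range real"
  have "T \<inter> {..B} \<subseteq> real ` {..nat \<lceil>B\<rceil>}"
    using T by (auto simp: image_iff le_nat_iff) linarith
  then show ?thesis
    by (intro finite_imp_compact) (auto intro: finite_subset)
qed (simp flip: atLeastAtMost_def)

lemma semiflow_time_set: "semiflow T F \<Longrightarrow> time_set T"
  by (simp add: semiflow_def)

lemma semiflow_comp:
  assumes "semiflow T F" "s \<in> T" "t \<in> T"
  shows "F t (F s x) = F (s + t) x"
  using assms unfolding semiflow_def by simp

lemma semiflow_commute:
  assumes "semiflow T F" "s \<in> T" "t \<in> T"
  shows "F t (F s x) = F s (F t x)"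
  using semiflow_comp[OF assms] semiflow_comp[OF assms(1,3,2)] by (simp add: add.commute)

lemma tendsto_semiflow:
  assumes "semiflow T F" "\<forall>\<^sub>F n in G. tt n \<in> T" "(tt \<longlongrightarrow> t) G" "t \<in> T" "(xs \<longlongrightarrow> x) G"
  shows "((\<lambda>n. F (tt n) (xs n)) \<longlongrightarrow> F t x) G"
proof -
  have "continuous_on (T \<times> UNIV) (\<lambda>(t, x). F t x)"
    using assms(1) by (simp add: semiflow_def)
  from continuous_on_tendsto_compose[OF this tendsto_Pair[OF assms(3,5)]] assms(2,4)
  show ?thesis by (simp add: eventually_mono)
qed

lemma continuous_on_semiflow:
  assumes "semiflow T F" "t \<in> T"
  shows "continuous_on UNIV (F t)"
proof -
  have "continuous_on (T \<times> UNIV) (\<lambda>(t, x). F t x)"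
    using assms(1) by (simp add: semiflow_def)
  then have "continuous_on UNIV (\<lambda>x. (\<lambda>(t, x). F t x) (t, x))"
    by (rule continuous_on_compose2) (use assms(2) in \<open>auto intro: continuous_intros\<close>)
  then show ?thesis
    by simp
qed

lemma orbit_rel_iff: "(x, y) \<in> orbit_rel T F \<longleftrightarrow> (\<exists>t\<in>T. y = F t x)"
  by (auto simp: orbit_rel_def orbit_def)

lemma closed_nonwandering_rel: "closed (nonwandering_rel T F)"
  by (simp add: nonwandering_rel_def)

lemma image_nonwandering_rel_subset:
  assumes "continuous_on UNIV g" "g ` orbit_rel T F \<subseteq> orbit_rel T F"
  shows "g ` nonwandering_rel T F \<subseteq> nonwandering_rel T F"
  unfolding nonwandering_rel_def
  using assms closure_subset by (intro image_closure_subset) (auto intro: continuous_on_subset)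

lemma mem_nonwandering_rel_iff:
  fixes F :: "real \<Rightarrow> 'a::first_countable_topology \<Rightarrow> 'a"
  shows "(x, y) \<in> nonwandering_rel T F \<longleftrightarrow>
    (\<exists>xs tt. (\<forall>n. tt n \<in> T) \<and> xs \<longlonglongrightarrow> x \<and> (\<lambda>n. F (tt n) (xs n)) \<longlonglongrightarrow> y)"
proof
  assume "(x, y) \<in> nonwandering_rel T F"
  then obtain p where p: "\<And>n. p n \<in> orbit_rel T F" "p \<longlonglongrightarrow> (x, y)"
    unfolding nonwandering_rel_def closure_sequential by blast
  have "\<forall>n. \<exists>t. t \<in> T \<and> snd (p n) = F t (fst (p n))"
    using p(1) by (fastforce simp: orbit_rel_def orbit_def case_prod_beta)
  then obtain tt where tt: "\<forall>n. tt n \<in> T \<and> snd (p n) = F (tt n) (fst (p n))"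
    by (auto simp: choice_iff)
  have "(\<lambda>n. F (tt n) (fst (p n))) \<longlonglongrightarrow> y"
    using tendsto_snd[OF p(2)] tt by simp
  with tt tendsto_fst[OF p(2)]
  show "\<exists>xs tt. (\<forall>n. tt n \<in> T) \<and> xs \<longlonglongrightarrow> x \<and> (\<lambda>n. F (tt n) (xs n)) \<longlonglongrightarrow> y"
    by (intro exI[of _ "\<lambda>n. fst (p n)"] exI[of _ tt]) simp
next
  assume "\<exists>xs tt. (\<forall>n. tt n \<in> T) \<and> xs \<longlonglongrightarrow> x \<and> (\<lambda>n. F (tt n) (xs n)) \<longlonglongrightarrow> y"
  then obtain xs tt where "\<forall>n. tt n \<in> T" "xs \<longlonglongrightarrow> x" "(\<lambda>n. F (tt n) (xs n)) \<longlonglongrightarrow> y"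
    by blast
  then show "(x, y) \<in> nonwandering_rel T F"
    unfolding nonwandering_rel_def closure_sequential
    by (intro exI[of _ "\<lambda>n. (xs n, F (tt n) (xs n))"]) (auto simp: orbit_rel_iff intro: tendsto_Pair)
qed

lemma mem_orbit_of_bounded_times:
  fixes F :: "real \<Rightarrow> 'a::{first_countable_topology, t2_space} \<Rightarrow> 'a"
  assumes sf: "semiflow T F" and tt: "\<forall>n. tt n \<in> T \<and> tt n \<le> B"
    and xs: "xs \<longlonglongrightarrow> x" and y: "(\<lambda>n. F (tt n) (xs n)) \<longlonglongrightarrow> y"
  shows "y \<in> orbit T F x"
proof -
  have "seq_compact (T \<inter> {..B})"
    by (intro compact_imp_seq_compact compact_time_set_atMost semiflow_time_set[OF sf])
  then obtain t r where t: "t \<in> T \<inter> {..B}" and r: "strict_mono r" "(tt \<circ> r) \<longlonglongrightarrow> t"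
    using tt by (blast elim: seq_compactE)
  have "(\<lambda>n. F ((tt \<circ> r) n) ((xs \<circ> r) n)) \<longlonglongrightarrow> F t x"
    using t r tt by (intro tendsto_semiflow[OF sf] LIMSEQ_subseq_LIMSEQ[OF xs]) (auto simp: o_def)
  moreover have "(\<lambda>n. F ((tt \<circ> r) n) ((xs \<circ> r) n)) \<longlonglongrightarrow> y"
    using LIMSEQ_subseq_LIMSEQ[OF y r(1)] by (simp add: o_def)
  ultimately have "y = F t x"
    by (rule LIMSEQ_unique[rotated])
  with t show ?thesis
    by (auto simp: orbit_def)
qed

lemma nonwandering_rel_of_unbounded_times:
  assumes sf: "semiflow T F" and tt: "\<forall>n. tt n \<in> T" "filterlim tt at_top sequentially"
    and xs: "xs \<longlonglongrightarrow> x" and y: "(\<lambda>n. F (tt n) (xs n)) \<longlonglongrightarrow> y" and s: "s \<in> T"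
  shows "(F s x, y) \<in> nonwandering_rel T F"
  unfolding nonwandering_rel_def
proof (rule Lim_in_closed_set)
  show "(\<lambda>n. (F s (xs n), F (tt n) (xs n))) \<longlonglongrightarrow> (F s x, y)"
    using s by (intro tendsto_Pair tendsto_semiflow[OF sf _ tendsto_const] xs y) auto
  have "\<forall>\<^sub>F n in sequentially. s \<le> tt n"
    using tt(2) by (simp add: filterlim_at_top)
  then show "\<forall>\<^sub>F n in sequentially. (F s (xs n), F (tt n) (xs n)) \<in> closure (orbit_rel T F)"
  proof (rule eventually_mono)
    fix n assume "s \<le> tt n"
    then have "tt n - s \<in> T"
      using time_set_diff[OF semiflow_time_set[OF sf] s] tt(1) by blast
    moreover from this have "F (tt n) (xs n) = F (tt n - s) (F s (xs n))"
      using semiflow_comp[OF sf s] by simp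
    ultimately show "(F s (xs n), F (tt n) (xs n)) \<in> closure (orbit_rel T F)"
      using closure_subset by (fastforce simp: orbit_rel_iff)
  qed
qed simp_all

lemma nonwandering_rel_cases:
  fixes F :: "real \<Rightarrow> 'a::{first_countable_topology, t2_space} \<Rightarrow> 'a"
  assumes sf: "semiflow T F" and "(x, y) \<in> nonwandering_rel T F"
  shows "y \<in> orbit T F x \<or> (\<forall>s\<in>T. (F s x, y) \<in> nonwandering_rel T F)"
proof -
  obtain xs tt where tt: "\<forall>n. tt n \<in> T" and xs: "xs \<longlonglongrightarrow> x" and y: "(\<lambda>n. F (tt n) (xs n)) \<longlonglongrightarrow> y"
    using assms(2) mem_nonwandering_rel_iff by blast
  show ?thesis
  proof (cases "filterlim tt at_top sequentially")
    case True
    then show ?thesis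
      using nonwandering_rel_of_unbounded_times[OF sf tt True xs y] by blast
  next
    case False
    then obtain B where "\<not> (\<forall>\<^sub>F n in sequentially. B \<le> tt n)"
      by (auto simp: filterlim_at_top)
    from not_eventually_sequentiallyD[OF this]
    obtain r :: "nat \<Rightarrow> nat" where r: "strict_mono r" "\<forall>n. \<not> B \<le> tt (r n)"
      by blast
    have "y \<in> orbit T F x"
      using mem_orbit_of_bounded_times[OF sf, of "tt \<circ> r" B "xs \<circ> r"] tt r
        LIMSEQ_subseq_LIMSEQ[OF xs r(1)] LIMSEQ_subseq_LIMSEQ[OF y r(1)]
      by (auto simp: o_def not_le less_imp_le)
    then show ?thesis ..
  qed
qed

lemma forward_invariant_nonwandering_rel:
  assumes sf: "semiflow T F"
  shows "forward_invariant T (prod_action F) (nonwandering_rel T F)"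
  unfolding forward_invariant_def
proof
  fix t assume t: "t \<in> T"
  note cont = continuous_on_semiflow[OF sf t]
  show "prod_action F t ` nonwandering_rel T F \<subseteq> nonwandering_rel T F"
  proof (rule image_nonwandering_rel_subset)
    show "continuous_on UNIV (prod_action F t)"
      unfolding prod_action_def case_prod_beta
      by (intro continuous_on_Pair continuous_on_compose2[OF cont] continuous_on_fst continuous_on_snd
          continuous_on_id) auto
    show "prod_action F t ` orbit_rel T F \<subseteq> orbit_rel T F"
    proof
      fix p assume "p \<in> prod_action F t ` orbit_rel T F"
      then obtain a s where s: "s \<in> T" and p: "p = (F t a, F s (F t a))"
        by (auto simp: prod_action_def orbit_rel_iff semiflow_commute[OF sf _ t])
      show "p \<in> orbit_rel T F"
        unfolding p orbit_rel_iff using s by blast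
    qed
  qed
qed

lemma forward_invariant_Down_nonwandering_rel:
  assumes sf: "semiflow T F"
  shows "forward_invariant T F (Down (nonwandering_rel T F) x)"
  unfolding forward_invariant_def
proof
  fix t assume t: "t \<in> T"
  note cont = continuous_on_semiflow[OF sf t]
  have "(\<lambda>(a, b). (a, F t b)) ` nonwandering_rel T F \<subseteq> nonwandering_rel T F"
  proof (rule image_nonwandering_rel_subset)
    show "continuous_on UNIV (\<lambda>(a, b). (a, F t b))"
      unfolding case_prod_beta
      by (intro continuous_on_Pair continuous_on_compose2[OF cont] continuous_on_fst continuous_on_snd
          continuous_on_id) auto
    show "(\<lambda>(a, b). (a, F t b)) ` orbit_rel T F \<subseteq> orbit_rel T F"
    proof
      fix p assume "p \<in> (\<lambda>(a, b). (a, F t b)) ` orbit_rel T F"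
      then obtain a s where s: "s \<in> T" and p: "p = (a, F (s + t) a)"
        by (auto simp: orbit_rel_iff semiflow_comp[OF sf _ t])
      have "s + t \<in> T"
        using time_set_add[OF semiflow_time_set[OF sf] s t] .
      then show "p \<in> orbit_rel T F"
        unfolding p orbit_rel_iff by blast
    qed
  qed
  then show "F t ` Down (nonwandering_rel T F) x \<subseteq> Down (nonwandering_rel T F) x"
    by (force simp: Down_def)
qed

lemma orbit_subset_Down_nonwandering_rel: "orbit T F x \<subseteq> Down (nonwandering_rel T F) x"
  using closure_subset[of "orbit_rel T F"] by (auto simp: Down_def nonwandering_rel_def orbit_rel_def)

lemma omega_limit_subset_Down_nonwandering_rel:
  fixes F :: "real \<Rightarrow> 'a::first_countable_topology \<Rightarrow> 'a"
  shows "omega_limit T F x \<subseteq> Down (nonwandering_rel T F) x"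
  by (auto simp: omega_limit_def Down_def mem_nonwandering_rel_iff)

lemma Down_nonwandering_rel_subset_orbit_point:
  fixes F :: "real \<Rightarrow> 'a::{first_countable_topology, t2_space} \<Rightarrow> 'a"
  assumes sf: "semiflow T F" and y: "y \<in> orbit T F x"
  shows "Down (nonwandering_rel T F) x \<subseteq> orbit T F x \<union> Down (nonwandering_rel T F) y"
  using nonwandering_rel_cases[OF sf] y by (fastforce simp: Down_def orbit_def)

lemma Down_nonwandering_rel_subset_omega_limit_point:
  fixes F :: "real \<Rightarrow> 'a::{first_countable_topology, t2_space} \<Rightarrow> 'a"
  assumes sf: "semiflow T F" and z: "z \<in> omega_limit T F x"
  shows "Down (nonwandering_rel T F) x \<subseteq> orbit T F x \<union> Down (nonwandering_rel T F) z"
proof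
  fix y assume "y \<in> Down (nonwandering_rel T F) x"
  then have "(x, y) \<in> nonwandering_rel T F"
    by (simp add: Down_def)
  from nonwandering_rel_cases[OF sf this]
  consider "y \<in> orbit T F x" | "\<forall>s\<in>T. (F s x, y) \<in> nonwandering_rel T F"
    by blast
  then show "y \<in> orbit T F x \<union> Down (nonwandering_rel T F) z"
  proof cases
    case 2
    obtain s where s: "\<forall>n. s n \<in> T" and lim: "(\<lambda>n. F (s n) x) \<longlonglongrightarrow> z"
      using z by (auto simp: omega_limit_def)
    have "(F (s n) x, y) \<in> nonwandering_rel T F" for n
      using 2 s by blast
    moreover have "(\<lambda>n. (F (s n) x, y)) \<longlonglongrightarrow> (z, y)"
      using lim by (intro tendsto_Pair tendsto_const)
    ultimately have "(z, y) \<in> nonwandering_rel T F"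
      by (rule closed_sequentially[OF closed_nonwandering_rel])
    then show ?thesis
      by (simp add: Down_def)
  qed simp
qed

lemma Down_nonwandering_rel_orbit_point_subset:
  assumes sf: "semiflow T F" and s: "s \<in> T" and open_map: "\<And>U. open U \<Longrightarrow> open (F s ` U)"
  shows "Down (nonwandering_rel T F) (F s x) \<subseteq> Down (nonwandering_rel T F) x"
proof
  fix w assume "w \<in> Down (nonwandering_rel T F) (F s x)"
  then have sw: "(F s x, w) \<in> closure (orbit_rel T F)"
    by (simp add: Down_def nonwandering_rel_def)
  have "(x, w) \<in> closure (orbit_rel T F)"
    unfolding closure_iff_nhds_not_empty
  proof (intro allI impI)
    fix A S assume S: "S \<subseteq> A" "open S" "(x, w) \<in> S"
    obtain U V where UV: "open U" "open V" "(x, w) \<in> U \<times> V" "U \<times> V \<subseteq> S"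
      using open_prod_elim[OF S(2,3)] by blast
    have "open (F s ` U \<times> V)"
      using UV open_map by (intro open_Times) auto
    moreover have "(F s x, w) \<in> F s ` U \<times> V"
      using UV by auto
    ultimately have "(F s ` U \<times> V) \<inter> orbit_rel T F \<noteq> {}"
      using sw open_Int_closure_eq_empty by blast
    then obtain b t where b: "b \<in> U" "t \<in> T" "F t (F s b) \<in> V"
      by (auto simp: orbit_rel_iff)
    have "s + t \<in> T"
      using time_set_add[OF semiflow_time_set[OF sf] s b(2)] .
    then have "(b, F t (F s b)) \<in> orbit_rel T F"
      unfolding orbit_rel_iff semiflow_comp[OF sf s b(2)] by blast
    with b UV S(1) show "orbit_rel T F \<inter> A \<noteq> {}"
      by blast
  qed
  then show "w \<in> Down (nonwandering_rel T F) x"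
    by (simp add: Down_def nonwandering_rel_def)
qed

theorem proposition10:
  fixes T :: "real set" and F :: "real \<Rightarrow> 'a::metric_space \<Rightarrow> 'a"
  assumes "semiflow T F" and "connected (UNIV :: 'a set)"
  shows "forward_invariant T (prod_action F) (nonwandering_rel T F)
    \<and> (\<forall>x.
        forward_invariant T F (Down (nonwandering_rel T F) x)
      \<and> orbit T F x \<union> omega_limit T F x \<subseteq> Down (nonwandering_rel T F) x
      \<and> (omega_limit T F x \<noteq> {} \<longrightarrow>
           Down (nonwandering_rel T F) x
             \<subseteq> orbit T F x \<union> Down_set (nonwandering_rel T F) (omega_limit T F x))
      \<and> (\<forall>y\<in>orbit T F x.
           Down (nonwandering_rel T F) x \<subseteq> orbit T F x \<union> Down (nonwandering_rel T F) y)
      \<and> ((\<forall>t\<in>T. \<forall>U. open U \<longrightarrow> open (F t ` U)) \<longrightarrow>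
           (\<forall>y\<in>orbit T F x.
              Down (nonwandering_rel T F) x = orbit T F x \<union> Down (nonwandering_rel T F) y)))"
proof (intro conjI allI impI ballI)
  note sf = assms(1)
  fix x
  show "forward_invariant T (prod_action F) (nonwandering_rel T F)"
    by (rule forward_invariant_nonwandering_rel[OF sf])
  show "forward_invariant T F (Down (nonwandering_rel T F) x)"
    by (rule forward_invariant_Down_nonwandering_rel[OF sf])
  show "orbit T F x \<union> omega_limit T F x \<subseteq> Down (nonwandering_rel T F) x"
    by (intro Un_least orbit_subset_Down_nonwandering_rel omega_limit_subset_Down_nonwandering_rel)
  show "Down (nonwandering_rel T F) x \<subseteq> orbit T F x \<union> Down (nonwandering_rel T F) y"
    if "y \<in> orbit T F x" for y
    using Down_nonwandering_rel_subset_orbit_point[OF sf that] .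
  show "Down (nonwandering_rel T F) x
      \<subseteq> orbit T F x \<union> Down_set (nonwandering_rel T F) (omega_limit T F x)"
    if "omega_limit T F x \<noteq> {}"
    using that Down_nonwandering_rel_subset_omega_limit_point[OF sf] by (auto simp: Down_set_def)
  show "Down (nonwandering_rel T F) x = orbit T F x \<union> Down (nonwandering_rel T F) y"
    if open_maps: "\<forall>t\<in>T. \<forall>U. open U \<longrightarrow> open (F t ` U)" and y: "y \<in> orbit T F x" for y
  proof -
    obtain s where s: "s \<in> T" and "y = F s x"
      using y by (auto simp: orbit_def)
    moreover have "Down (nonwandering_rel T F) (F s x) \<subseteq> Down (nonwandering_rel T F) x"
      using open_maps s by (intro Down_nonwandering_rel_orbit_point_subset[OF sf s]) blast
    ultimately have "Down (nonwandering_rel T F) y \<subseteq> Down (nonwandering_rel T F) x"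
      by simp
    then show ?thesis
      using Down_nonwandering_rel_subset_orbit_point[OF sf y] orbit_subset_Down_nonwandering_rel
      by blast
  qed
qed

end
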